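(* Let $Q(X,Y)=\sum_{i=0}^{t} Q_i(X)Y^i \in M_{s,\ell}$ have $Y$-degree exactly $t$, where $t < s$. Then $G(X)^{s-t}$ divides $Q_t(X)$.
   Context: Let $\mathbb F_q$ be a finite field and $n<q$. Let $\alpha_0,\dots,\alpha_{n-1}$ be distinct nonzero elements of $\mathbb F_q$ and $w_0,\dots,w_{n-1}$ nonzero elements of $\mathbb F_q$. Let $r=(r_0,\dots,r_{n-1})\in\mathbb F_q^n$ and $r_i'=r_i/w_i$. Let $G(X)=\prod_{i=0}^{n-1}(X-\alpha_i)$. Let $s\le \ell$ be positive integers. A polynomial $Q\in\mathbb F_q[X,Y]$ passes through a point $(a,b)\in\mathbb F_q^2$ with multiplicity $s$ if $Q(X+a,Y+b)$ has no monomials of total degree less than $s$. $M_{s,\ell}$ denotes the set of all $Q\in\mathbb F_q[X,Y]$ of $Y$-degree at most $\ell$ that pass through each of the $n$ points $(\alpha_i,r_i')$ with multiplicity $s$. *)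

theory Defs
  imports "HOL-Computational_Algebra.Polynomial" "HOL-Library.Cardinality"
begin

text \<open>Bivariate polynomials Q(X,Y) are represented as elements of type 'a poly poly:
  a polynomial in Y whose coefficients are polynomials in X, so that
  coeff Q i = Q_i(X) and coeff (coeff Q j) i is the coefficient of X^i Y^j.\<close>

definition shift2 :: "'a::comm_ring_1 \<Rightarrow> 'a \<Rightarrow> 'a poly poly \<Rightarrow> 'a poly poly" where
  "shift2 a b Q = pcompose (map_poly (\<lambda>p. pcompose p [:a, 1:]) Q) [:[:b:], 1:]"

text \<open>Q(X+a,Y+b) has no monomial X^i Y^j with total degree i+j < s.\<close>
definition passes_mult :: "'a::comm_ring_1 poly poly \<Rightarrow> 'a \<Rightarrow> 'a \<Rightarrow> nat \<Rightarrow> bool" where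
  "passes_mult Q a b s \<longleftrightarrow> (\<forall>i j. i + j < s \<longrightarrow> coeff (coeff (shift2 a b Q) j) i = 0)"

definition M_set :: "nat \<Rightarrow> (nat \<Rightarrow> 'a::field) \<Rightarrow> (nat \<Rightarrow> 'a) \<Rightarrow> (nat \<Rightarrow> 'a) \<Rightarrow> nat \<Rightarrow> nat \<Rightarrow> 'a poly poly set" where
  "M_set n \<alpha> w r s l = {Q. degree Q \<le> l \<and> (\<forall>i<n. passes_mult Q (\<alpha> i) (r i / w i) s)}"

definition Gpoly :: "nat \<Rightarrow> (nat \<Rightarrow> 'a::comm_ring_1) \<Rightarrow> 'a poly" where
  "Gpoly n \<alpha> = (\<Prod>i<n. [:- \<alpha> i, 1:])"

end

theory Submission
  imports Defs
begin

text \<open>Shifting Y leaves the top Y-coefficient of a bivariate polynomial unchanged, so the top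
  coefficient of Q(X+a,Y+b) is Q_t(X+a). Multiplicity s at (a,b) makes the coefficients of X^j
  in it vanish for j < s - t, i.e. (X-a)^(s-t) divides Q_t. Since the \<alpha>_i are distinct, the
  root multiplicities of Q_t at them are independent, so the product G^(s-t) divides Q_t.\<close>

lemma pcompose_power_left: "pcompose (p ^ k) q = pcompose p q ^ k"
  for p q :: "'a::comm_semiring_1 poly"
  by (induct k) (simp_all add: pcompose_mult pcompose_1)

lemma coeff_shift2_degree:
  fixes Q :: "'a::idom poly poly"
  shows "coeff (shift2 a b Q) (degree Q) = pcompose (coeff Q (degree Q)) [:a, 1:]"
proof -
  define f where "f = (\<lambda>p::'a poly. pcompose p [:a, 1:])"
  have f_nonzero: "f p \<noteq> 0" if "p \<noteq> 0" for p
    using that pcompose_eq_0_iff[of "[:a, 1:]" p] by (simp add: f_def)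
  have degree_map: "degree (map_poly f Q) = degree Q"
    by (rule degree_map_poly[OF f_nonzero])
  have "coeff (shift2 a b Q) (degree Q) = lead_coeff (pcompose (map_poly f Q) [:[:b:], 1:])"
    by (simp add: shift2_def f_def degree_pcompose degree_map[unfolded f_def])
  also have "\<dots> = lead_coeff (map_poly f Q)"
    by (subst lead_coeff_comp) auto
  also have "\<dots> = f (coeff Q (degree Q))"
    by (simp add: degree_map[unfolded f_def] coeff_map_poly f_def)
  finally show ?thesis by (simp add: f_def)
qed

lemma linear_power_dvd_if_shifted_coeffs_zero:
  fixes P :: "'a::comm_ring_1 poly"
  assumes "\<forall>j<k. coeff (pcompose P [:a, 1:]) j = 0"
  shows "[:-a, 1:] ^ k dvd P"
proof -
  obtain R where R: "pcompose P [:a, 1:] = monom 1 k * R"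
    using assms monom_1_dvd_iff' by blast
  have "P = pcompose (pcompose P [:a, 1:]) [:-a, 1:]"
    by (simp add: pcompose_assoc[symmetric] pcompose_pCons)
  also have "\<dots> = pcompose (monom 1 k) [:-a, 1:] * pcompose R [:-a, 1:]"
    by (simp add: R pcompose_mult)
  also have "pcompose (monom 1 k) [:-a, 1:] = [:-a, 1:] ^ k"
    by (simp add: monom_altdef pcompose_power_left pcompose_pCons)
  finally show ?thesis by simp
qed

lemma prod_linear_power_dvd:
  fixes \<alpha> :: "'b \<Rightarrow> 'a::idom"
  assumes "finite A" and "inj_on \<alpha> A" and "\<And>i. i \<in> A \<Longrightarrow> [:-\<alpha> i, 1:] ^ k dvd P"
  shows "(\<Prod>i\<in>A. [:-\<alpha> i, 1:] ^ k) dvd P"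
  using assms
proof (induction A arbitrary: P rule: finite_induct)
  case empty then show ?case by simp
next
  case (insert i A)
  define F where "F = (\<Prod>j\<in>A. [:-\<alpha> j, 1:] ^ k)"
  obtain q where q: "P = F * q"
    using insert by (auto simp: F_def intro: inj_on_subset elim!: dvdE)
  text \<open>\<alpha> i is not a root of F, so all of its multiplicity in P sits in q.\<close>
  have F_root_free: "poly F (\<alpha> i) \<noteq> 0"
    using insert.hyps insert.prems(1) by (auto simp: F_def poly_prod prod_zero_iff)
  have "[:-\<alpha> i, 1:] ^ k dvd q"
  proof (cases "q = 0")
    case False
    then have "P \<noteq> 0" using F_root_free q by auto
    have "order (\<alpha> i) P = order (\<alpha> i) q"
      using \<open>P \<noteq> 0\<close> F_root_free q by (simp add: order_mult order_0I)
    moreover have "k \<le> order (\<alpha> i) P"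
      using \<open>P \<noteq> 0\<close> insert.prems(2) by (simp add: order_divides)
    ultimately show ?thesis by (simp add: order_divides)
  qed simp
  then have "F * [:-\<alpha> i, 1:] ^ k dvd P" using q by simp
  then show ?case using insert.hyps by (simp add: F_def mult.commute)
qed

lemma Gpoly_power_dvd:
  fixes \<alpha> :: "nat \<Rightarrow> 'a::idom"
  assumes "inj_on \<alpha> {..<n}" and "\<And>i. i < n \<Longrightarrow> [:-\<alpha> i, 1:] ^ k dvd P"
  shows "Gpoly n \<alpha> ^ k dvd P"
  using prod_linear_power_dvd[OF _ assms] by (simp add: Gpoly_def prod_power_distrib)

theorem lemma1:
  fixes \<alpha> w r :: "nat \<Rightarrow> 'a::{finite, field}"
    and n s l t :: nat and Q :: "'a poly poly"
  assumes "n < CARD('a)"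
    and "inj_on \<alpha> {..<n}"
    and "\<forall>i<n. \<alpha> i \<noteq> 0"
    and "\<forall>i<n. w i \<noteq> 0"
    and "0 < s" and "s \<le> l"
    and "Q \<in> M_set n \<alpha> w r s l"
    and "degree Q = t"
    and "t < s"
  shows "Gpoly n \<alpha> ^ (s - t) dvd coeff Q t"
proof (rule Gpoly_power_dvd[OF assms(2)])
  fix i assume "i < n"
  then have mult: "passes_mult Q (\<alpha> i) (r i / w i) s"
    using assms(7) by (simp add: M_set_def)
  show "[:-\<alpha> i, 1:] ^ (s - t) dvd coeff Q t"
  proof (rule linear_power_dvd_if_shifted_coeffs_zero, intro allI impI)
    fix j assume "j < s - t"
    then have "coeff (coeff (shift2 (\<alpha> i) (r i / w i) Q) t) j = 0"
      using mult by (simp add: passes_mult_def)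
    then show "coeff (pcompose (coeff Q t) [:\<alpha> i, 1:]) j = 0"
      using coeff_shift2_degree[of "\<alpha> i" "r i / w i" Q] assms(8) by simp
  qed
qed

end
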